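(* Let $0<\beta<1$. Consider the problem: among all pairs $(p,u)$ with $p>0$ and $u\in W^{1,1}[-p,p]$ nonnegative, satisfying $u(p)=u(-p)=0$ and $\int_{-p}^p u\,dx=1$, minimize $$J[u]=\int_{-p}^p\Big[\sqrt{1+u'(x)^2}-\beta\Big]\,dx.$$ Then there exists a unique minimizer, it is smooth up to the boundary of $[-p,p]$, and it is given by $$u(x)=\sqrt{R^2-x^2}-\beta R,\qquad R^{-1}=\sqrt{\arccos\beta-\beta\sqrt{1-\beta^2}},\qquad p=\sqrt{1-\beta^2}\,R.$$ Furthermore, the graph of $u$ meets the $x$-axis at $\pm p$ with interior angle $\arccos\beta$, i.e. $\frac{1}{\sqrt{1+u'(\pm p)^2}}=\beta$.
   Context: $W^{1,1}[-p,p]$ denotes the Sobolev space of integrable functions on $[-p,p]$ with integrable weak derivative (absolutely continuous functions). The half-width $p>0$ is free (part of the minimization). *)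

theory Defs
  imports "HOL-Analysis.Analysis"
begin

text \<open>W^{1,1}[-p,p] in one dimension = absolutely continuous functions:
  u has weak derivative g, with g absolutely integrable on [-p,p] and
  u x = u(-p) + integral of g over [-p,x] for all x in [-p,p].\<close>
definition W11_with_deriv :: "real \<Rightarrow> (real \<Rightarrow> real) \<Rightarrow> (real \<Rightarrow> real) \<Rightarrow> bool" where
  "W11_with_deriv p u g \<longleftrightarrow>
     g absolutely_integrable_on {-p..p} \<and>
     (\<forall>x\<in>{-p..p}. u x = u (-p) + integral {-p..x} g)"

definition admissible :: "real \<Rightarrow> (real \<Rightarrow> real) \<Rightarrow> (real \<Rightarrow> real) \<Rightarrow> bool" where
  "admissible p u g \<longleftrightarrow>
     p > 0 \<and> W11_with_deriv p u g \<and>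
     (\<forall>x\<in>{-p..p}. u x \<ge> 0) \<and> u p = 0 \<and> u (-p) = 0 \<and>
     integral {-p..p} u = 1"

definition Jfun :: "real \<Rightarrow> real \<Rightarrow> (real \<Rightarrow> real) \<Rightarrow> real" where
  "Jfun \<beta> p g = integral {-p..p} (\<lambda>x. sqrt (1 + (g x)^2) - \<beta>)"

end

theory Submission
  imports Defs
begin

text \<open>
  Calibration by circles. For an admissible pair \<open>(p, u)\<close> let \<open>R = p / \<surd>(1 - \<beta>\<^sup>2)\<close>, the
  radius of the circle through \<open>(\<plusminus>p, 0)\<close> that crosses the axis at the angle \<open>arccos \<beta>\<close>.
  The unit tangent \<open>(\<surd>(R\<^sup>2 - x\<^sup>2), -x) / R\<close> of this circle gives, by Cauchy-Schwarz,
  \<open>\<surd>(1 + u'\<^sup>2) \<ge> (\<surd>(R\<^sup>2 - x\<^sup>2) - x u') / R\<close> pointwise. Integrating, with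
  \<open>\<integral> x u' = -\<integral> u = -1\<close> (integration by parts, done by Fubini since \<open>u\<close> is only absolutely
  continuous), yields \<open>J[u] \<ge> 1/R + c R \<ge> 2 \<surd>c\<close> with \<open>c = arccos \<beta> - \<beta> \<surd>(1 - \<beta>\<^sup>2)\<close>.
  Equality forces \<open>R = 1/\<surd>c\<close> and forces \<open>u'\<close> to be the slope of the circle almost everywhere,
  so \<open>u\<close> is the circular cap. Every derivative of the cap is a polynomial times a power of
  \<open>R\<^sup>2 - x\<^sup>2\<close>, which is smooth on \<open>[-p, p] \<subset> (-R, R)\<close>.
\<close>

section \<open>Integration and absolutely continuous functions\<close>

lemma sigma_finite_measure_completion:
  assumes "sigma_finite_measure M"
  shows "sigma_finite_measure (completion M)"
proof -
  obtain A where "countable A" "A \<subseteq> sets M" "\<Union>A = space M" "\<forall>a\<in>A. emeasure M a \<noteq> \<infinity>"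
    using assms unfolding sigma_finite_measure_def by blast
  then show ?thesis
    unfolding sigma_finite_measure_def by (intro exI[of _ A]) (auto simp: subset_eq main_part_sets)
qed

interpretation lebesgue_pair: pair_sigma_finite "lebesgue :: real measure" "lebesgue :: real measure"
  by (simp add: pair_sigma_finite_def sigma_finite_measure_completion lborel.sigma_finite_measure_axioms)

lemma integrable_lower_triangle:
  fixes G :: "real \<Rightarrow> real"
  assumes G: "integrable lebesgue G"
  shows "integrable (lebesgue \<Otimes>\<^sub>M lebesgue) (\<lambda>(x, t). indicator {a..b} x * (if t \<le> x then G t else 0))"
    (is "integrable _ (case_prod ?k)")
proof (rule lebesgue_pair.Fubini_integrable)
  have [measurable]: "G \<in> borel_measurable lebesgue"
    using G by (rule borel_measurable_integrable)
  have [measurable]: "fst \<in> lebesgue \<Otimes>\<^sub>M lebesgue \<rightarrow>\<^sub>M (borel :: real measure)"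
    "snd \<in> lebesgue \<Otimes>\<^sub>M lebesgue \<rightarrow>\<^sub>M (borel :: real measure)"
    "(\<lambda>t. t) \<in> (lebesgue :: real measure) \<rightarrow>\<^sub>M borel"
    by (auto intro: measurable_compose[OF _ id_borel_measurable_lebesgue[unfolded id_def]])
  show "case_prod ?k \<in> borel_measurable (lebesgue \<Otimes>\<^sub>M lebesgue)"
    by measurable
  have k_le: "\<bar>?k x t\<bar> \<le> \<bar>G t\<bar>" for x t
    by (auto simp: indicator_def)
  have k_int: "integrable lebesgue (?k x)" for x
    by (rule Bochner_Integration.integrable_bound[OF G]) (measurable, use k_le in auto)
  then show "AE x in lebesgue. integrable lebesgue (\<lambda>t. case_prod ?k (x, t))"
    by simp
  show "integrable lebesgue (\<lambda>x. \<integral>t. norm (case_prod ?k (x, t)) \<partial>lebesgue)"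
  proof (rule Bochner_Integration.integrable_bound)
    show "integrable lebesgue (\<lambda>x. indicator {a..b} x * (\<integral>t. \<bar>G t\<bar> \<partial>lebesgue) :: real)"
      by (intro integrable_mult_left integrable_real_indicator) (auto simp: emeasure_lborel_Icc_eq)
    show "(\<lambda>x. \<integral>t. norm (case_prod ?k (x, t)) \<partial>lebesgue) \<in> borel_measurable lebesgue"
      by measurable
    have bound: "(\<integral>t. \<bar>?k x t\<bar> \<partial>lebesgue) \<le> (\<integral>t. \<bar>G t\<bar> \<partial>lebesgue)" for x
      by (intro integral_mono integrable_abs k_int G k_le)
    have "norm (\<integral>t. norm (?k x t) \<partial>lebesgue) \<le> norm (indicator {a..b} x * (\<integral>t. \<bar>G t\<bar> \<partial>lebesgue))" for x
      by (cases "x \<in> {a..b}") (use bound[of x] in auto)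
    then show "AE x in lebesgue. norm (\<integral>t. norm (case_prod ?k (x, t)) \<partial>lebesgue)
                 \<le> norm (indicator {a..b} x * (\<integral>t. \<bar>G t\<bar> \<partial>lebesgue) :: real)"
      by simp
  qed
qed

lemma has_integral_cauchy_repeated_integration:
  fixes g :: "real \<Rightarrow> real"
  assumes g: "g absolutely_integrable_on {a..b}"
  shows "((\<lambda>t. (b - t) * g t) has_integral integral {a..b} (\<lambda>x. integral {a..x} g)) {a..b}"
proof -
  define G where "G t = indicator {a..b} t * g t" for t
  define k where "k x t = indicator {a..b} x * (if t \<le> x then G t else 0)" for x t
  have "integrable lebesgue G"
    using g unfolding set_integrable_def G_def by simp
  then have k: "integrable (lebesgue \<Otimes>\<^sub>M lebesgue) (case_prod k)"
    unfolding k_def by (rule integrable_lower_triangle)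
  have k_x: "(\<integral>t. k x t \<partial>lebesgue) = indicator {a..b} x * integral {a..x} g" for x
  proof (cases "x \<in> {a..b}")
    case True
    then have "k x = (\<lambda>t. indicator {a..x} t *\<^sub>R g t)"
      by (auto simp: k_def G_def indicator_def)
    then have "(\<integral>t. k x t \<partial>lebesgue) = (LINT t:{a..x}|lebesgue. g t)"
      by (simp add: set_lebesgue_integral_def)
    also have "\<dots> = integral {a..x} g"
      using True by (intro set_lebesgue_integral_eq_integral(2) absolutely_integrable_on_subinterval[OF g]) auto
    finally show ?thesis
      using True by simp
  qed (simp add: k_def)
  have k_t: "(\<integral>x. k x t \<partial>lebesgue) = indicator {a..b} t * ((b - t) * g t)" for t
  proof (cases "t \<in> {a..b}")
    case True
    then have "(\<lambda>x. k x t) = (\<lambda>x. g t * indicator {t..b} x)"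
      by (auto simp: k_def G_def indicator_def)
    then show ?thesis
      using True by simp
  next
    case False
    then have "(\<lambda>x. k x t) = (\<lambda>x. 0)"
      by (auto simp: k_def G_def)
    then show ?thesis
      using False by simp
  qed
  have A1: "(\<lambda>x. integral {a..x} g) absolutely_integrable_on {a..b}"
    using lebesgue_pair.integrable_fst[OF k] k_x by (simp add: set_integrable_def)
  have A2: "(\<lambda>t. (b - t) * g t) absolutely_integrable_on {a..b}"
    using lebesgue_pair.integrable_snd[OF k] k_t by (simp add: set_integrable_def)
  have "integral {a..b} (\<lambda>x. integral {a..x} g) = (\<integral>x. (\<integral>t. k x t \<partial>lebesgue) \<partial>lebesgue)"
    using set_lebesgue_integral_eq_integral(2)[OF A1] by (simp add: set_lebesgue_integral_def k_x)
  also have "\<dots> = (\<integral>t. (\<integral>x. k x t \<partial>lebesgue) \<partial>lebesgue)"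
    using lebesgue_pair.Fubini_integral[OF k] by simp
  also have "\<dots> = integral {a..b} (\<lambda>t. (b - t) * g t)"
    using set_lebesgue_integral_eq_integral(2)[OF A2] by (simp add: set_lebesgue_integral_def k_t)
  finally show ?thesis
    using A2 by (simp add: set_lebesgue_integral_eq_integral(1) has_integral_iff)
qed

lemma absolutely_integrable_sqrt_one_plus_sq:
  fixes g :: "real \<Rightarrow> real"
  assumes g: "g absolutely_integrable_on {a..b}"
  shows "(\<lambda>x. sqrt (1 + (g x)\<^sup>2)) absolutely_integrable_on {a..b}"
proof (rule measurable_bounded_by_integrable_imp_absolutely_integrable)
  have "g \<in> borel_measurable (lebesgue_on {a..b})"
    using g by (intro integrable_imp_measurable) (simp add: set_lebesgue_integral_eq_integral(1))
  then show "(\<lambda>x. sqrt (1 + (g x)\<^sup>2)) \<in> borel_measurable (lebesgue_on {a..b})"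
    by measurable
  show "(\<lambda>x. 1 + \<bar>g x\<bar>) integrable_on {a..b}"
    using g by (intro integrable_add integrable_const_ivl) (simp add: absolutely_integrable_on_def)
  fix x
  have "sqrt (1 + (g x)\<^sup>2) \<le> sqrt ((1 + \<bar>g x\<bar>)\<^sup>2)"
    by (intro real_sqrt_le_mono) (simp add: power2_eq_square algebra_simps)
  then show "norm (sqrt (1 + (g x)\<^sup>2)) \<le> 1 + \<bar>g x\<bar>"
    by simp
qed simp

lemma nonneg_integral_eq_0_imp_ae_zero:
  fixes f :: "'a::euclidean_space \<Rightarrow> real"
  assumes "f integrable_on S" "\<And>x. x \<in> S \<Longrightarrow> 0 \<le> f x" "integral S f = 0"
  obtains N where "negligible N" "\<And>x. x \<in> S - N \<Longrightarrow> f x = 0"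
proof -
  have f: "f absolutely_integrable_on S"
    by (rule nonnegative_absolutely_integrable_1[OF assms(1,2)])
  then have int: "integrable lebesgue (\<lambda>x. indicator S x *\<^sub>R f x)"
    by (simp add: set_integrable_def)
  have "integral\<^sup>L lebesgue (\<lambda>x. indicator S x *\<^sub>R f x) = 0"
    using set_lebesgue_integral_eq_integral(2)[OF f] assms(3) by (simp add: set_lebesgue_integral_def)
  moreover have "AE x in lebesgue. 0 \<le> indicator S x *\<^sub>R f x"
    using assms(2) by (auto simp: indicator_def)
  ultimately have "AE x in lebesgue. indicator S x *\<^sub>R f x = 0"
    using integral_nonneg_eq_0_iff_AE[OF int] by simp
  then obtain N where "negligible N" "{x. indicator S x *\<^sub>R f x \<noteq> 0} \<subseteq> N"
    unfolding eventually_ae_filter_negligible by blast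
  then show ?thesis
    by (intro that) (auto simp: indicator_def)
qed

lemma W11_first_moment:
  assumes W: "W11_with_deriv p u g" and "0 \<le> p" "u (-p) = 0" "u p = 0"
  shows "((\<lambda>x. x * g x) has_integral - integral {-p..p} u) {-p..p}"
proof -
  have g: "g absolutely_integrable_on {-p..p}"
    and u: "\<And>x. x \<in> {-p..p} \<Longrightarrow> u x = integral {-p..x} g"
    using W assms(3) by (auto simp: W11_with_deriv_def)
  have "integral {-p..p} u = integral {-p..p} (\<lambda>x. integral {-p..x} g)"
    by (rule integral_cong) (rule u)
  then have weighted: "((\<lambda>t. (p - t) * g t) has_integral integral {-p..p} u) {-p..p}"
    using has_integral_cauchy_repeated_integration[OF g] by simp
  have "(g has_integral 0) {-p..p}"
    using g u[of p] assms(2,4) by (simp add: absolutely_integrable_on_def has_integral_iff)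
  from has_integral_diff[OF has_integral_mult_right[OF this, of p] weighted]
  show ?thesis
    by (simp add: algebra_simps)
qed

lemma W11_ae_eq_deriv_imp_eq:
  assumes "W11_with_deriv p u g" "W11_with_deriv p v h" "u (-p) = v (-p)"
    and "negligible N" "\<And>x. x \<in> {-p..p} - N \<Longrightarrow> g x = h x"
    and x: "x \<in> {-p..p}"
  shows "u x = v x"
proof -
  have "u x = u (-p) + integral {-p..x} g" "v x = v (-p) + integral {-p..x} h"
    using assms(1,2) x unfolding W11_with_deriv_def by blast+
  moreover have "integral {-p..x} h = integral {-p..x} g"
    using assms(5) x by (intro integral_spike[OF assms(4)]) auto
  ultimately show ?thesis
    using assms(3) by simp
qed

lemma Jfun_eq_integral_length:
  assumes "0 \<le> p" "g absolutely_integrable_on {-p..p}"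
  shows "Jfun \<beta> p g = integral {-p..p} (\<lambda>x. sqrt (1 + (g x)\<^sup>2)) - 2 * p * \<beta>"
proof -
  have "(\<lambda>x. sqrt (1 + (g x)\<^sup>2)) integrable_on {-p..p}"
    using absolutely_integrable_sqrt_one_plus_sq[OF assms(2)] by (simp add: absolutely_integrable_on_def)
  from integral_diff[OF this integrable_const_ivl[of \<beta> "-p" p]]
  show ?thesis
    using assms(1) by (simp add: Jfun_def)
qed

section \<open>Circles and elementary inequalities\<close>

lemma abs_less_imp_sq_diff_pos:
  fixes x R :: real
  assumes "\<bar>x\<bar> < R"
  shows "0 < R\<^sup>2 - x\<^sup>2"
proof -
  have "\<bar>x\<bar>\<^sup>2 < R\<^sup>2"
    using assms by (intro power_strict_mono) auto
  then show ?thesis by simp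
qed

lemma has_real_derivative_sqrt_circle:
  fixes R x :: real
  assumes "\<bar>x\<bar> < R"
  shows "((\<lambda>x. sqrt (R\<^sup>2 - x\<^sup>2)) has_real_derivative - x / sqrt (R\<^sup>2 - x\<^sup>2)) (at x)"
proof -
  have "0 < R\<^sup>2 - x\<^sup>2"
    using assms by (rule abs_less_imp_sq_diff_pos)
  then show ?thesis
    by (auto intro!: derivative_eq_intros simp: field_simps)
qed

lemma has_real_derivative_circle_area:
  fixes R x :: real
  assumes "\<bar>x\<bar> < R"
  shows "((\<lambda>x. (x * sqrt (R\<^sup>2 - x\<^sup>2) + R\<^sup>2 * arcsin (x / R)) / 2) has_real_derivative sqrt (R\<^sup>2 - x\<^sup>2)) (at x)"
proof -
  define q where "q = sqrt (R\<^sup>2 - x\<^sup>2)"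
  have R: "0 < R" using assms by linarith
  have q: "0 < q" "q\<^sup>2 = R\<^sup>2 - x\<^sup>2"
    using abs_less_imp_sq_diff_pos[OF assms] by (auto simp: q_def)
  have "sqrt (1 - (x / R)\<^sup>2) = sqrt ((q / R)\<^sup>2)"
    using R q by (simp add: field_simps)
  then have sqrt_eq: "sqrt (1 - (x / R)\<^sup>2) = q / R"
    using R q by simp
  have "-1 < x / R" "x / R < 1"
    using assms R by (auto simp: abs_less_iff field_simps)
  from DERIV_chain2[OF DERIV_arcsin[OF this] DERIV_cdivide[OF DERIV_ident, of R]]
  have arcsin_deriv: "((\<lambda>x. arcsin (x / R)) has_real_derivative 1 / q) (at x)"
    using R q unfolding sqrt_eq by (simp add: field_simps)
  from DERIV_cdivide[OF DERIV_add[OF DERIV_mult[OF DERIV_ident has_real_derivative_sqrt_circle[OF assms]]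
      DERIV_cmult[OF arcsin_deriv, of "R\<^sup>2"]], of 2]
  show ?thesis
  proof (rule DERIV_cong)
    show "(1 * sqrt (R\<^sup>2 - x\<^sup>2) + - x / sqrt (R\<^sup>2 - x\<^sup>2) * x + R\<^sup>2 * (1 / q)) / 2 = sqrt (R\<^sup>2 - x\<^sup>2)"
      using q unfolding q_def[symmetric] by (simp add: field_simps power2_eq_square)
  qed
qed

lemma has_integral_sqrt_circle:
  fixes p R :: real
  assumes "0 \<le> p" "p < R"
  shows "((\<lambda>x. sqrt (R\<^sup>2 - x\<^sup>2)) has_integral p * sqrt (R\<^sup>2 - p\<^sup>2) + R\<^sup>2 * arcsin (p / R)) {-p..p}"
proof -
  define F where "F x = (x * sqrt (R\<^sup>2 - x\<^sup>2) + R\<^sup>2 * arcsin (x / R)) / 2" for x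
  have "((\<lambda>x. sqrt (R\<^sup>2 - x\<^sup>2)) has_integral F p - F (-p)) {-p..p}"
  proof (rule fundamental_theorem_of_calculus)
    fix x assume "x \<in> {-p..p}"
    then have "\<bar>x\<bar> < R"
      using assms by auto
    then have "(F has_real_derivative sqrt (R\<^sup>2 - x\<^sup>2)) (at x)"
      unfolding F_def by (rule has_real_derivative_circle_area)
    then show "(F has_vector_derivative sqrt (R\<^sup>2 - x\<^sup>2)) (at x within {-p..p})"
      by (simp add: has_real_derivative_iff_has_vector_derivative has_vector_derivative_at_within)
  qed (use assms in simp)
  moreover have "F p - F (-p) = p * sqrt (R\<^sup>2 - p\<^sup>2) + R\<^sup>2 * arcsin (p / R)"
  proof -
    have "arcsin (- (p / R)) = - arcsin (p / R)"
      using assms by (intro arcsin_minus) (auto simp: field_simps)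
    then show ?thesis
      by (simp add: F_def field_simps)
  qed
  ultimately show ?thesis
    by simp
qed

text \<open>The area of the part of the unit disc above the chord at height \<open>\<beta>\<close>.\<close>

definition segment_area :: "real \<Rightarrow> real" where
  "segment_area \<beta> = arccos \<beta> - \<beta> * sqrt (1 - \<beta>\<^sup>2)"

lemma segment_area_pos:
  assumes "0 < \<beta>" "\<beta> < 1"
  shows "0 < segment_area \<beta>"
proof -
  have "\<beta> * sqrt (1 - \<beta>\<^sup>2) < sqrt (1 - \<beta>\<^sup>2)"
    using assms by (simp add: power_less_one_iff)
  also have "\<dots> = sin (arccos \<beta>)"
    using assms by (simp add: sin_arccos)
  also have "\<dots> \<le> arccos \<beta>"
    using assms by (intro sin_x_le_x arccos_lbound) auto
  finally show ?thesis
    by (simp add: segment_area_def)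
qed

lemma chord_at_height:
  fixes \<beta> R p :: real
  assumes "0 < \<beta>" "\<beta> < 1" "0 < R" "p = sqrt (1 - \<beta>\<^sup>2) * R"
  shows "0 < p" "p < R" "sqrt (R\<^sup>2 - p\<^sup>2) = \<beta> * R" "arcsin (p / R) = arccos \<beta>"
proof -
  have "\<beta>\<^sup>2 < 1"
    using assms by (simp add: power_less_one_iff)
  then have s: "0 < sqrt (1 - \<beta>\<^sup>2)" "sqrt (1 - \<beta>\<^sup>2) < 1" "(sqrt (1 - \<beta>\<^sup>2))\<^sup>2 = 1 - \<beta>\<^sup>2"
    using assms by simp_all
  show "0 < p" "p < R"
    using assms s by simp_all
  have "R\<^sup>2 - p\<^sup>2 = R\<^sup>2 * (1 - (sqrt (1 - \<beta>\<^sup>2))\<^sup>2)"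
    using assms(4) by (simp add: power_mult_distrib algebra_simps)
  also have "\<dots> = (\<beta> * R)\<^sup>2"
    using s(3) by (simp add: power_mult_distrib)
  finally show "sqrt (R\<^sup>2 - p\<^sup>2) = \<beta> * R"
    using assms by simp
  show "arcsin (p / R) = arccos \<beta>"
    using assms by (simp add: arccos_arcsin_sqrt_pos power_le_one)
qed

lemma unit_vector_lagrange_identity:
  fixes a b y :: real
  assumes "a\<^sup>2 + b\<^sup>2 = 1"
  shows "1 + y\<^sup>2 = (a + b * y)\<^sup>2 + (a * y - b)\<^sup>2"
proof -
  have "1 + y\<^sup>2 = (a\<^sup>2 + b\<^sup>2) * (1 + y\<^sup>2)"
    using assms by simp
  also have "\<dots> = (a + b * y)\<^sup>2 + (a * y - b)\<^sup>2"
    by (simp add: power2_eq_square algebra_simps)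
  finally show ?thesis .
qed

lemma unit_vector_add_mult_le_sqrt:
  fixes a b y :: real
  assumes "a\<^sup>2 + b\<^sup>2 = 1"
  shows "a + b * y \<le> sqrt (1 + y\<^sup>2)"
proof (rule real_le_rsqrt)
  show "(a + b * y)\<^sup>2 \<le> 1 + y\<^sup>2"
    using unit_vector_lagrange_identity[OF assms, of y] zero_le_power2[of "a * y - b"] by linarith
qed

lemma unit_vector_add_mult_eq_sqrt_iff:
  fixes a b y :: real
  assumes "a\<^sup>2 + b\<^sup>2 = 1" "0 < a"
  shows "a + b * y = sqrt (1 + y\<^sup>2) \<longleftrightarrow> y = b / a"
proof
  assume "a + b * y = sqrt (1 + y\<^sup>2)"
  then have "(a + b * y)\<^sup>2 = 1 + y\<^sup>2"
    by (metis add_nonneg_nonneg real_sqrt_pow2 zero_le_one zero_le_power2)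
  then have "a * y - b = 0"
    using unit_vector_lagrange_identity[OF assms(1), of y] by simp
  then show "y = b / a"
    using assms(2) by (simp add: field_simps)
next
  assume y: "y = b / a"
  then have "a + b * y = (a\<^sup>2 + b\<^sup>2) / a"
    using assms(2) by (simp add: field_simps power2_eq_square)
  then have "0 \<le> a + b * y"
    using assms by simp
  moreover have "(a + b * y)\<^sup>2 = 1 + y\<^sup>2"
    using unit_vector_lagrange_identity[OF assms(1), of y] y assms(2) by simp
  ultimately show "a + b * y = sqrt (1 + y\<^sup>2)"
    by (metis real_sqrt_unique)
qed

lemma inverse_add_mult_minus_two_sqrt:
  fixes c R :: real
  assumes "0 < c" "0 < R"
  shows "1 / R + c * R - 2 * sqrt c = (sqrt c * R - 1)\<^sup>2 / R"
proof -
  have "c = (sqrt c)\<^sup>2"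
    using assms by simp
  then show ?thesis
    using assms by (simp add: field_simps power2_eq_square)
qed

lemma inverse_add_mult_ge_two_sqrt:
  fixes c R :: real
  assumes "0 < c" "0 < R"
  shows "2 * sqrt c \<le> 1 / R + c * R"
proof -
  have "0 \<le> (sqrt c * R - 1)\<^sup>2 / R"
    using assms(2) by simp
  then show ?thesis
    using inverse_add_mult_minus_two_sqrt[OF assms] by linarith
qed

lemma inverse_add_mult_eq_two_sqrt_iff:
  fixes c R :: real
  assumes "0 < c" "0 < R"
  shows "1 / R + c * R = 2 * sqrt c \<longleftrightarrow> R = 1 / sqrt c"
  using inverse_add_mult_minus_two_sqrt[OF assms] assms by (auto simp: field_simps)

section \<open>Calibration\<close>

text \<open>The excess of the length element \<open>\<surd>(1 + y\<^sup>2)\<close> of a graph with slope \<open>y\<close> at \<open>x\<close> over the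
  component of \<open>(1, y)\<close> along the unit tangent \<open>(\<surd>(R\<^sup>2 - x\<^sup>2), -x) / R\<close> of the circle of radius \<open>R\<close>.\<close>

definition calibration_defect :: "real \<Rightarrow> real \<Rightarrow> real \<Rightarrow> real" where
  "calibration_defect R x y = sqrt (1 + y\<^sup>2) - (sqrt (R\<^sup>2 - x\<^sup>2) - x * y) / R"

lemma circle_unit_tangent:
  fixes R x :: real
  assumes "0 < R" "\<bar>x\<bar> \<le> R"
  shows "(sqrt (R\<^sup>2 - x\<^sup>2) / R)\<^sup>2 + (- x / R)\<^sup>2 = 1"
proof -
  have "x\<^sup>2 \<le> R\<^sup>2"
    using assms abs_le_square_iff[of x R] by simp
  then show ?thesis
    using assms by (simp add: field_simps)
qed

lemma calibration_defect_nonneg: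
  assumes "0 < R" "\<bar>x\<bar> \<le> R"
  shows "0 \<le> calibration_defect R x y"
  using unit_vector_add_mult_le_sqrt[OF circle_unit_tangent[OF assms], of y]
  by (simp add: calibration_defect_def diff_divide_distrib)

lemma calibration_defect_eq_0_iff:
  assumes "0 < R" "\<bar>x\<bar> < R"
  shows "calibration_defect R x y = 0 \<longleftrightarrow> y = - x / sqrt (R\<^sup>2 - x\<^sup>2)"
proof -
  have "0 < sqrt (R\<^sup>2 - x\<^sup>2) / R"
    using assms abs_less_imp_sq_diff_pos[OF assms(2)] by simp
  from unit_vector_add_mult_eq_sqrt_iff[OF circle_unit_tangent[OF assms(1)] this, of y] assms(2)
  show ?thesis
    using assms(1) by (auto simp: calibration_defect_def diff_divide_distrib)
qed

lemma has_integral_calibration_defect: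
  assumes W: "W11_with_deriv p u g" and "0 \<le> p" "p < R" "u (-p) = 0" "u p = 0"
  shows "((\<lambda>x. calibration_defect R x (g x)) has_integral
           integral {-p..p} (\<lambda>x. sqrt (1 + (g x)\<^sup>2))
             - (p * sqrt (R\<^sup>2 - p\<^sup>2) + R\<^sup>2 * arcsin (p / R) + integral {-p..p} u) / R) {-p..p}"
proof -
  have "g absolutely_integrable_on {-p..p}"
    using W by (simp add: W11_with_deriv_def)
  then have length: "((\<lambda>x. sqrt (1 + (g x)\<^sup>2)) has_integral integral {-p..p} (\<lambda>x. sqrt (1 + (g x)\<^sup>2))) {-p..p}"
    using absolutely_integrable_sqrt_one_plus_sq by (simp add: absolutely_integrable_on_def integrable_integral)
  note area = has_integral_sqrt_circle[OF assms(2,3)]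
  note moment = W11_first_moment[OF assms(1,2,4,5)]
  have "(\<lambda>x. calibration_defect R x (g x))
      = (\<lambda>x. sqrt (1 + (g x)\<^sup>2) - (1 / R) * sqrt (R\<^sup>2 - x\<^sup>2) + (1 / R) * (x * g x))"
    using assms(2,3) by (auto simp: fun_eq_iff calibration_defect_def field_simps)
  with has_integral_add[OF has_integral_diff[OF length has_integral_mult_right[OF area, where c = "1 / R"]]
      has_integral_mult_right[OF moment, where c = "1 / R"]]
  show ?thesis
    by (simp add: add_divide_distrib algebra_simps)
qed

lemma Jfun_eq_calibration:
  assumes "0 < \<beta>" "\<beta> < 1" and adm: "admissible p u g"
    and R: "R = p / sqrt (1 - \<beta>\<^sup>2)"
  shows "(\<lambda>x. calibration_defect R x (g x)) integrable_on {-p..p}"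
    and "\<And>x. x \<in> {-p..p} \<Longrightarrow> 0 \<le> calibration_defect R x (g x)"
    and "Jfun \<beta> p g = 1 / R + segment_area \<beta> * R + integral {-p..p} (\<lambda>x. calibration_defect R x (g x))"
proof -
  have p: "0 < p" and W: "W11_with_deriv p u g"
    using adm by (auto simp: admissible_def)
  have "0 < sqrt (1 - \<beta>\<^sup>2)"
    using assms by (simp add: power_less_one_iff)
  then have "0 < R" and p_eq: "p = sqrt (1 - \<beta>\<^sup>2) * R"
    using p R by simp_all
  note chord = chord_at_height[OF assms(1,2) this]
  show "0 \<le> calibration_defect R x (g x)" if "x \<in> {-p..p}" for x
    using that chord(2) \<open>0 < R\<close> by (intro calibration_defect_nonneg) auto
  have defect: "((\<lambda>x. calibration_defect R x (g x)) has_integral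
      integral {-p..p} (\<lambda>x. sqrt (1 + (g x)\<^sup>2)) - (p * \<beta> + R * arccos \<beta> + 1 / R)) {-p..p}"
    using has_integral_calibration_defect[OF W _ chord(2)] adm p \<open>0 < R\<close>
    unfolding chord(3,4) by (simp add: admissible_def add_divide_distrib power2_eq_square)
  then show "(\<lambda>x. calibration_defect R x (g x)) integrable_on {-p..p}"
    by blast
  show "Jfun \<beta> p g = 1 / R + segment_area \<beta> * R + integral {-p..p} (\<lambda>x. calibration_defect R x (g x))"
    using integral_unique[OF defect] Jfun_eq_integral_length[of p g \<beta>] W p p_eq
    by (simp add: segment_area_def W11_with_deriv_def algebra_simps)
qed

lemma Jfun_ge_two_sqrt_segment_area:
  assumes "0 < \<beta>" "\<beta> < 1" "admissible p u g"
  shows "2 * sqrt (segment_area \<beta>) \<le> Jfun \<beta> p g"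
proof -
  define R where "R = p / sqrt (1 - \<beta>\<^sup>2)"
  note calibration = Jfun_eq_calibration[OF assms R_def]
  have "0 < R"
    using assms by (simp add: R_def admissible_def power_less_one_iff)
  then have "2 * sqrt (segment_area \<beta>) \<le> 1 / R + segment_area \<beta> * R"
    using assms by (intro inverse_add_mult_ge_two_sqrt segment_area_pos)
  moreover have "0 \<le> integral {-p..p} (\<lambda>x. calibration_defect R x (g x))"
    using calibration(1,2) by (rule integral_nonneg)
  ultimately show ?thesis
    using calibration(3) by linarith
qed

lemma calibration_equality_cases:
  assumes "0 < \<beta>" "\<beta> < 1" and adm: "admissible p u g"
    and J: "Jfun \<beta> p g \<le> 2 * sqrt (segment_area \<beta>)"
  shows "p / sqrt (1 - \<beta>\<^sup>2) = 1 / sqrt (segment_area \<beta>)"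
    and "integral {-p..p} (\<lambda>x. calibration_defect (p / sqrt (1 - \<beta>\<^sup>2)) x (g x)) = 0"
proof -
  define r where "r = p / sqrt (1 - \<beta>\<^sup>2)"
  have c: "0 < segment_area \<beta>"
    using assms(1,2) by (rule segment_area_pos)
  have r: "0 < r"
    using adm assms(1,2) by (simp add: admissible_def r_def power_less_one_iff)
  note calibration = Jfun_eq_calibration[OF assms(1,2) adm r_def]
  have "2 * sqrt (segment_area \<beta>) \<le> 1 / r + segment_area \<beta> * r"
    using c r by (rule inverse_add_mult_ge_two_sqrt)
  moreover have "0 \<le> integral {-p..p} (\<lambda>x. calibration_defect r x (g x))"
    using calibration(1,2) by (rule integral_nonneg)
  ultimately have "1 / r + segment_area \<beta> * r = 2 * sqrt (segment_area \<beta>)"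
    and "integral {-p..p} (\<lambda>x. calibration_defect r x (g x)) = 0"
    using calibration(3) J by linarith+
  then show "r = 1 / sqrt (segment_area \<beta>)"
    and "integral {-p..p} (\<lambda>x. calibration_defect r x (g x)) = 0"
    using inverse_add_mult_eq_two_sqrt_iff[OF c r] by simp_all
qed

section \<open>The circular cap\<close>

lemma W11_circle_cap:
  fixes R p c :: real
  assumes "0 \<le> p" "p < R"
  shows "W11_with_deriv p (\<lambda>x. sqrt (R\<^sup>2 - x\<^sup>2) - c) (\<lambda>x. - x / sqrt (R\<^sup>2 - x\<^sup>2))"
proof -
  define u where "u x = sqrt (R\<^sup>2 - x\<^sup>2) - c" for x
  define g where "g x = - x / sqrt (R\<^sup>2 - x\<^sup>2)" for x
  have deriv: "(u has_real_derivative g x) (at x)" if "x \<in> {-p..p}" for x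
  proof -
    have "\<bar>x\<bar> < R"
      using that assms by auto
    from DERIV_diff[OF has_real_derivative_sqrt_circle[OF this] DERIV_const[of c]]
    show ?thesis
      by (simp add: u_def[abs_def] g_def)
  qed
  have "continuous_on {-p..p} g"
    unfolding g_def using assms abs_less_imp_sq_diff_pos[of _ R] by (intro continuous_intros) force
  then have "g absolutely_integrable_on {-p..p}"
    by (rule absolutely_integrable_continuous_real)
  moreover have "u x = u (-p) + integral {-p..x} g" if "x \<in> {-p..p}" for x
  proof -
    have "(g has_integral u x - u (-p)) {-p..x}"
      using that deriv
      by (intro fundamental_theorem_of_calculus)
         (auto simp: has_real_derivative_iff_has_vector_derivative intro: has_vector_derivative_at_within)
    then show ?thesis
      by (simp add: integral_unique)
  qed
  ultimately have "W11_with_deriv p u g"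
    unfolding W11_with_deriv_def by blast
  then show ?thesis
    by (simp add: u_def[abs_def] g_def[abs_def])
qed

lemma integral_circle_cap:
  fixes \<beta> R p :: real
  assumes "0 < \<beta>" "\<beta> < 1" "0 < R" "p = sqrt (1 - \<beta>\<^sup>2) * R"
  shows "integral {-p..p} (\<lambda>x. sqrt (R\<^sup>2 - x\<^sup>2) - \<beta> * R) = R\<^sup>2 * segment_area \<beta>"
proof -
  note chord = chord_at_height[OF assms]
  have "((\<lambda>x. sqrt (R\<^sup>2 - x\<^sup>2) - \<beta> * R) has_integral
      (p * sqrt (R\<^sup>2 - p\<^sup>2) + R\<^sup>2 * arcsin (p / R)) - (p - (-p)) * (\<beta> * R)) {-p..p}"
    using has_integral_diff[OF has_integral_sqrt_circle has_integral_const_real] chord(1,2) by simp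
  then have "integral {-p..p} (\<lambda>x. sqrt (R\<^sup>2 - x\<^sup>2) - \<beta> * R) = R\<^sup>2 * arccos \<beta> - \<beta> * R * p"
    unfolding chord(3,4) by (simp add: integral_unique algebra_simps)
  then show ?thesis
    by (simp add: segment_area_def assms(4) power2_eq_square algebra_simps)
qed

lemma admissible_circle_cap:
  fixes \<beta> R p :: real
  assumes "0 < \<beta>" "\<beta> < 1" "0 < R" "p = sqrt (1 - \<beta>\<^sup>2) * R" "R\<^sup>2 * segment_area \<beta> = 1"
  shows "admissible p (\<lambda>x. sqrt (R\<^sup>2 - x\<^sup>2) - \<beta> * R) (\<lambda>x. - x / sqrt (R\<^sup>2 - x\<^sup>2))"
proof -
  note chord = chord_at_height[OF assms(1-4)]
  have "sqrt (R\<^sup>2 - p\<^sup>2) \<le> sqrt (R\<^sup>2 - x\<^sup>2)" if "x \<in> {-p..p}" for x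
    using that abs_le_square_iff[of x p] chord(1) by (simp add: abs_le_iff)
  then show ?thesis
    using chord W11_circle_cap[of p R] integral_circle_cap[OF assms(1-4)] assms(5)
    by (auto simp: admissible_def)
qed

lemma Jfun_circle_cap:
  fixes \<beta> R p :: real
  assumes "0 < \<beta>" "\<beta> < 1" "R = 1 / sqrt (segment_area \<beta>)" "p = sqrt (1 - \<beta>\<^sup>2) * R"
  shows "Jfun \<beta> p (\<lambda>x. - x / sqrt (R\<^sup>2 - x\<^sup>2)) = 2 * sqrt (segment_area \<beta>)"
proof -
  have c: "0 < segment_area \<beta>"
    using assms(1,2) by (rule segment_area_pos)
  then have R: "0 < R" "R\<^sup>2 * segment_area \<beta> = 1"
    using assms(3) by (simp_all add: power_divide)
  note adm = admissible_circle_cap[OF assms(1,2) R(1) assms(4) R(2)]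
  note chord = chord_at_height[OF assms(1,2) R(1) assms(4)]
  have "R = p / sqrt (1 - \<beta>\<^sup>2)"
    using assms(4) chord(1) by auto
  note calibration = Jfun_eq_calibration[OF assms(1,2) adm this]
  have "calibration_defect R x (- x / sqrt (R\<^sup>2 - x\<^sup>2)) = 0" if "x \<in> {-p..p}" for x
    using that chord(2) R(1) by (subst calibration_defect_eq_0_iff) auto
  then have "integral {-p..p} (\<lambda>x. calibration_defect R x (- x / sqrt (R\<^sup>2 - x\<^sup>2))) = 0"
    by (intro integral_unique has_integral_is_0) auto
  moreover have "1 / R + segment_area \<beta> * R = 2 * sqrt (segment_area \<beta>)"
    using inverse_add_mult_eq_two_sqrt_iff[OF c R(1)] assms(3) by simp
  ultimately show ?thesis
    using calibration(3) by simp
qed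

lemma Jfun_le_two_sqrt_segment_area_imp_circle_cap:
  assumes "0 < \<beta>" "\<beta> < 1" and adm: "admissible p u g"
    and "Jfun \<beta> p g \<le> 2 * sqrt (segment_area \<beta>)"
    and R: "R = 1 / sqrt (segment_area \<beta>)"
  shows "p = sqrt (1 - \<beta>\<^sup>2) * R" "\<And>x. x \<in> {-p..p} \<Longrightarrow> u x = sqrt (R\<^sup>2 - x\<^sup>2) - \<beta> * R"
proof -
  note equality = calibration_equality_cases[OF assms(1-4), folded R]
  have "0 < R"
    using R segment_area_pos[OF assms(1,2)] by simp
  moreover have "0 < sqrt (1 - \<beta>\<^sup>2)"
    using assms(1,2) by (simp add: power_less_one_iff)
  ultimately show p_eq: "p = sqrt (1 - \<beta>\<^sup>2) * R"
    using equality(1) by (simp add: field_simps)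
  note chord = chord_at_height[OF assms(1,2) \<open>0 < R\<close> p_eq]
  note calibration = Jfun_eq_calibration[OF assms(1,2) adm equality(1)[symmetric]]
  obtain N where N: "negligible N" "\<And>x. x \<in> {-p..p} - N \<Longrightarrow> calibration_defect R x (g x) = 0"
    using nonneg_integral_eq_0_imp_ae_zero[OF calibration(1,2) equality(2)[unfolded equality(1)]] by blast
  have g_eq: "g x = - x / sqrt (R\<^sup>2 - x\<^sup>2)" if "x \<in> {-p..p} - N" for x
  proof -
    have "\<bar>x\<bar> < R"
      using that chord(2) by auto
    then show ?thesis
      using N(2)[OF that] calibration_defect_eq_0_iff[OF \<open>0 < R\<close>] by blast
  qed
  have cap: "W11_with_deriv p (\<lambda>x. sqrt (R\<^sup>2 - x\<^sup>2) - \<beta> * R) (\<lambda>x. - x / sqrt (R\<^sup>2 - x\<^sup>2))"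
    using chord(1,2) by (intro W11_circle_cap) auto
  have u: "W11_with_deriv p u g" "u (-p) = sqrt (R\<^sup>2 - (-p)\<^sup>2) - \<beta> * R"
    using adm chord(3) by (simp_all add: admissible_def)
  show "u x = sqrt (R\<^sup>2 - x\<^sup>2) - \<beta> * R" if "x \<in> {-p..p}" for x
    using W11_ae_eq_deriv_imp_eq[OF u(1) cap u(2) N(1) _ that] g_eq by blast
qed

lemma has_real_derivative_poly_times_circle_powr:
  fixes R e x :: real and q :: "real poly"
  assumes "\<bar>x\<bar> < R"
  shows "((\<lambda>y. poly q y * (R\<^sup>2 - y\<^sup>2) powr e) has_real_derivative
           poly (pderiv q * [:R\<^sup>2, 0, -1:] + smult (-2 * e) ([:0, 1:] * q)) x * (R\<^sup>2 - x\<^sup>2) powr (e - 1)) (at x)"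
proof -
  have pos: "0 < R\<^sup>2 - x\<^sup>2"
    using assms by (rule abs_less_imp_sq_diff_pos)
  have "((\<lambda>y. R\<^sup>2 - y\<^sup>2) has_real_derivative - (2 * x)) (at x)"
    by (auto intro!: derivative_eq_intros)
  from DERIV_mult[OF poly_DERIV DERIV_chain2[OF has_real_derivative_powr[OF pos] this]]
  have "((\<lambda>y. poly q y * (R\<^sup>2 - y\<^sup>2) powr e) has_real_derivative
      poly (pderiv q) x * (R\<^sup>2 - x\<^sup>2) powr e + e * (R\<^sup>2 - x\<^sup>2) powr (e - 1) * - (2 * x) * poly q x) (at x)" .
  then show ?thesis
  proof (rule DERIV_cong)
    have pe: "(R\<^sup>2 - x\<^sup>2) powr e = (R\<^sup>2 - x\<^sup>2) * (R\<^sup>2 - x\<^sup>2) powr (e - 1)"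
      using powr_mult_base[OF less_imp_le[OF pos], of "e - 1"] by simp
    show "poly (pderiv q) x * (R\<^sup>2 - x\<^sup>2) powr e + e * (R\<^sup>2 - x\<^sup>2) powr (e - 1) * - (2 * x) * poly q x
        = poly (pderiv q * [:R\<^sup>2, 0, -1:] + smult (-2 * e) ([:0, 1:] * q)) x * (R\<^sup>2 - x\<^sup>2) powr (e - 1)"
      unfolding pe by (simp add: algebra_simps power2_eq_square)
  qed
qed

lemma has_real_derivative_circle_powr_form:
  fixes R e d x :: real and q :: "real poly"
  assumes f: "\<And>y. \<bar>y\<bar> < R \<Longrightarrow> f y = poly q y * (R\<^sup>2 - y\<^sup>2) powr e + d" and x: "\<bar>x\<bar> < R"
  shows "(f has_real_derivative
           poly (pderiv q * [:R\<^sup>2, 0, -1:] + smult (-2 * e) ([:0, 1:] * q)) x * (R\<^sup>2 - x\<^sup>2) powr (e - 1)) (at x)"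
proof (rule has_field_derivative_transform_within_open[where S = "ball 0 R"])
  show "((\<lambda>y. poly q y * (R\<^sup>2 - y\<^sup>2) powr e + d) has_real_derivative
      poly (pderiv q * [:R\<^sup>2, 0, -1:] + smult (-2 * e) ([:0, 1:] * q)) x * (R\<^sup>2 - x\<^sup>2) powr (e - 1)) (at x)"
    using DERIV_add[OF has_real_derivative_poly_times_circle_powr[OF x] DERIV_const[of d]] by simp
qed (use x f in auto)

lemma higher_deriv_circle_cap_eq:
  fixes R c :: real
  obtains q e d where
    "\<And>x. \<bar>x\<bar> < R \<Longrightarrow> (deriv ^^ n) (\<lambda>x. sqrt (R\<^sup>2 - x\<^sup>2) - c) x = poly q x * (R\<^sup>2 - x\<^sup>2) powr e + d"
proof (induction n arbitrary: thesis)
  case 0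
  show ?case
    by (rule 0[of "[:1:]" "1 / 2" "- c"]) (simp add: powr_half_sqrt[OF less_imp_le[OF abs_less_imp_sq_diff_pos]])
next
  case (Suc n)
  obtain q e d where "\<And>x. \<bar>x\<bar> < R \<Longrightarrow> (deriv ^^ n) (\<lambda>x. sqrt (R\<^sup>2 - x\<^sup>2) - c) x = poly q x * (R\<^sup>2 - x\<^sup>2) powr e + d"
    using Suc.IH by blast
  from has_real_derivative_circle_powr_form[OF this]
  show ?case
    by (intro Suc.prems[of "pderiv q * [:R\<^sup>2, 0, -1:] + smult (-2 * e) ([:0, 1:] * q)" "e - 1" 0])
       (simp add: DERIV_imp_deriv)
qed

lemma higher_deriv_circle_cap_differentiable:
  fixes R c x :: real
  assumes "\<bar>x\<bar> < R"
  shows "(deriv ^^ n) (\<lambda>x. sqrt (R\<^sup>2 - x\<^sup>2) - c) differentiable (at x)"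
proof -
  obtain q e d where "\<And>x. \<bar>x\<bar> < R \<Longrightarrow> (deriv ^^ n) (\<lambda>x. sqrt (R\<^sup>2 - x\<^sup>2) - c) x = poly q x * (R\<^sup>2 - x\<^sup>2) powr e + d"
    using higher_deriv_circle_cap_eq[of R n c] by blast
  from has_real_derivative_circle_powr_form[OF this assms]
  show ?thesis
    unfolding real_differentiable_def by blast
qed

lemma circle_cap_contact_angle:
  fixes \<beta> R p :: real
  assumes "0 < \<beta>" "\<beta> < 1" "0 < R" "p = sqrt (1 - \<beta>\<^sup>2) * R"
  shows "1 / sqrt (1 + (deriv (\<lambda>x. sqrt (R\<^sup>2 - x\<^sup>2) - \<beta> * R) p)\<^sup>2) = \<beta>"
    and "1 / sqrt (1 + (deriv (\<lambda>x. sqrt (R\<^sup>2 - x\<^sup>2) - \<beta> * R) (-p))\<^sup>2) = \<beta>"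
proof -
  note chord = chord_at_height[OF assms]
  have slope: "deriv (\<lambda>x. sqrt (R\<^sup>2 - x\<^sup>2) - \<beta> * R) x = - x / sqrt (R\<^sup>2 - x\<^sup>2)" if "\<bar>x\<bar> < R" for x
    using DERIV_diff[OF has_real_derivative_sqrt_circle[OF that] DERIV_const[of "\<beta> * R"]]
    by (simp add: DERIV_imp_deriv)
  have "\<beta>\<^sup>2 \<le> 1"
    using assms by (simp add: power_le_one)
  then have "(sqrt (1 - \<beta>\<^sup>2))\<^sup>2 = 1 - \<beta>\<^sup>2"
    by simp
  then have "1 + (sqrt (1 - \<beta>\<^sup>2) / \<beta>)\<^sup>2 = (1 / \<beta>)\<^sup>2"
    using assms(1) by (simp add: power_divide field_simps)
  moreover have "p / sqrt (R\<^sup>2 - p\<^sup>2) = sqrt (1 - \<beta>\<^sup>2) / \<beta>"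
    unfolding chord(3) using assms(3,4) by simp
  ultimately have angle: "1 / sqrt (1 + (p / sqrt (R\<^sup>2 - p\<^sup>2))\<^sup>2) = \<beta>"
    using assms(1) by simp
  show "1 / sqrt (1 + (deriv (\<lambda>x. sqrt (R\<^sup>2 - x\<^sup>2) - \<beta> * R) p)\<^sup>2) = \<beta>"
    and "1 / sqrt (1 + (deriv (\<lambda>x. sqrt (R\<^sup>2 - x\<^sup>2) - \<beta> * R) (-p))\<^sup>2) = \<beta>"
    using angle slope[of p] slope[of "-p"] chord(1,2) by simp_all
qed

theorem mainTheorem5:
  fixes \<beta> :: real
  assumes "0 < \<beta>" "\<beta> < 1"
  defines "R \<equiv> 1 / sqrt (arccos \<beta> - \<beta> * sqrt (1 - \<beta>^2))"
  defines "p0 \<equiv> sqrt (1 - \<beta>^2) * R"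
  defines "u0 \<equiv> (\<lambda>x::real. sqrt (R^2 - x^2) - \<beta> * R)"
  shows "(\<exists>g0. admissible p0 u0 g0 \<and>
            (\<forall>p u g. admissible p u g \<longrightarrow> Jfun \<beta> p0 g0 \<le> Jfun \<beta> p g))
       \<and> (\<forall>p u g. admissible p u g \<and>
            (\<forall>p' u' g'. admissible p' u' g' \<longrightarrow> Jfun \<beta> p g \<le> Jfun \<beta> p' g')
            \<longrightarrow> p = p0 \<and> (\<forall>x\<in>{-p..p}. u x = u0 x))
       \<and> (\<forall>n. \<forall>x\<in>{-p0..p0}. ((deriv ^^ n) u0) differentiable (at x))
       \<and> 1 / sqrt (1 + (deriv u0 p0)^2) = \<beta>
       \<and> 1 / sqrt (1 + (deriv u0 (-p0))^2) = \<beta>"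
proof -
  note p0 = meta_eq_to_obj_eq[OF p0_def]
  define g0 where "g0 x = - x / sqrt (R\<^sup>2 - x\<^sup>2)" for x
  have R_def': "R = 1 / sqrt (segment_area \<beta>)"
    by (simp add: R_def segment_area_def)
  have R: "0 < R" "R\<^sup>2 * segment_area \<beta> = 1"
    using R_def' segment_area_pos[OF assms(1,2)] by (simp_all add: power_divide)
  note chord = chord_at_height[OF assms(1,2) R(1) p0]
  have adm: "admissible p0 u0 g0"
    unfolding u0_def g0_def[abs_def] using admissible_circle_cap[OF assms(1,2) R(1) p0 R(2)] .
  have J0: "Jfun \<beta> p0 g0 = 2 * sqrt (segment_area \<beta>)"
    unfolding g0_def[abs_def] using Jfun_circle_cap[OF assms(1,2) R_def' p0] .
  have minimal: "Jfun \<beta> p0 g0 \<le> Jfun \<beta> p g" if "admissible p u g" for p u g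
    unfolding J0 using Jfun_ge_two_sqrt_segment_area[OF assms(1,2) that] .
  have unique: "p = p0 \<and> (\<forall>x\<in>{-p..p}. u x = u0 x)"
    if "admissible p u g" "Jfun \<beta> p g \<le> Jfun \<beta> p0 g0" for p u g
    using Jfun_le_two_sqrt_segment_area_imp_circle_cap[OF assms(1,2) that(1) that(2)[unfolded J0] R_def']
    unfolding p0 u0_def by blast
  have "(deriv ^^ n) u0 differentiable (at x)" if "x \<in> {-p0..p0}" for n x
    unfolding u0_def using that chord(2) by (intro higher_deriv_circle_cap_differentiable) auto
  then show ?thesis
    using adm minimal unique circle_cap_contact_angle[OF assms(1,2) R(1) p0]
    unfolding u0_def by blast
qed

end
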